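(* Let $n\ge1$, let $\mathfrak{n}=\mathfrak{n}(n)$ be the Lie algebra defined in the context, and let $\operatorname{Der}(\mathfrak{n})_1$ be as in the context. Let $B=\{e'_1,\dots,e'_n\}$ be any basis of $E$ and let $\mathfrak{B}(B)$ be the associated ordered basis of $\mathfrak{n}$. If $D\in\operatorname{Der}(\mathfrak{n})_1$, then the matrix of $D$ in the ordered basis $\mathfrak{B}(B)$ is lower triangular, i.e. for every $w\in\mathfrak{B}(B)$, the coordinates of $D(w)$ with respect to $\mathfrak{B}(B)$ are zero on all basis vectors that precede $w$ in the order of $\mathfrak{B}(B)$.
   Context: Fix a field of characteristic zero and a positive integer $n$. The Lie algebra $\mathfrak{n}(n)$ has basis $e_1,\dots,e_n,a,b,x$; $u,y$; $e_i\wedge e_j$ ($1\le i<j\le n$); $c$; $x_1,\dots,x_n$; $u_1,\dots,u_n$; $y_1,\dots,y_n$; $f,h$. Its bracket is defined on basis elements by: $[e_i,e_j]=e_i\wedge e_j$ for $i<j$ (so $[e_j,e_i]=-e_i\wedge e_j$), $[e_i,x]=x_i$, $[e_i,u]=u_i$, $[e_i,y]=y_i$, $[a,b]=c$, $[a,y]=f$, $[a,c]=h$, $[b,u]=h$, $[b,y]=h$, $[x,u]=f$, $[x,y]=h$, extended by antisymmetry, and all other brackets of pairs of basis elements are zero. Let $E=\operatorname{span}\{e_1,\dots,e_n\}$ and let $W$ be the span of all the other basis vectors (so $\mathfrak{n}=E\oplus W$). Let $\operatorname{Der}(\mathfrak{n})_1$ be the set of derivations $D$ of $\mathfrak{n}$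 with $D(E)\subset W$. For a basis $B=\{e'_1,\dots,e'_n\}$ of $E$, put $x'_i=[e'_i,x]$, $u'_i=[e'_i,u]$, $y'_i=[e'_i,y]$, $e'_i\wedge e'_j=[e'_i,e'_j]$, and let $\mathfrak{B}(B)$ be the ordered basis $e'_1,\dots,e'_n,a,b,x,u,y,(e'_i\wedge e'_j)_{1\le i<j\le n}$ (lexicographic order), $c,x'_1,\dots,x'_n,u'_1,\dots,u'_n,y'_1,\dots,y'_n,f,h$. (For $B=\{e_1,\dots,e_n\}$ this is the original basis; for every $B$ the bracket relations above hold with primed elements in place of unprimed ones.) *)

theory Defs
  imports Main
begin

text \<open>Basis labels of the Lie algebra n(n). Indices of e_i, e_i wedge e_j, x_i, u_i, y_i
  are 1-based natural numbers.\<close>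
datatype bidx = Ee nat | Aa | Bb | Xx | Uu | Yy | Wedge nat nat | Cc
  | Xs nat | Us nat | Ys nat | Ff | Hh

type_synonym 'k vec = "bidx \<Rightarrow> 'k"

definition valid_idx :: "nat \<Rightarrow> bidx set" where
  "valid_idx n =
     {Ee i | i. 1 \<le> i \<and> i \<le> n} \<union> {Aa, Bb, Xx, Uu, Yy}
     \<union> {Wedge i j | i j. 1 \<le> i \<and> i < j \<and> j \<le> n} \<union> {Cc}
     \<union> {Xs i | i. 1 \<le> i \<and> i \<le> n} \<union> {Us i | i. 1 \<le> i \<and> i \<le> n}
     \<union> {Ys i | i. 1 \<le> i \<and> i \<le> n} \<union> {Ff, Hh}"

definition nspace :: "nat \<Rightarrow> ('k::field) vec set" where
  "nspace n = {v. \<forall>r. r \<notin> valid_idx n \<longrightarrow> v r = 0}"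

definition delta :: "bidx \<Rightarrow> ('k::field) vec" where
  "delta q = (\<lambda>r. if r = q then 1 else 0)"

text \<open>The listed brackets [p,q] (those with p before q in the defining list);
  all other ones are zero except the antisymmetric counterparts.\<close>
fun pos_br :: "bidx \<Rightarrow> bidx \<Rightarrow> ('k::field) vec" where
  "pos_br (Ee i) (Ee j) = (if i < j then delta (Wedge i j) else (\<lambda>_. 0))"
| "pos_br (Ee i) Xx = delta (Xs i)"
| "pos_br (Ee i) Uu = delta (Us i)"
| "pos_br (Ee i) Yy = delta (Ys i)"
| "pos_br Aa Bb = delta Cc"
| "pos_br Aa Yy = delta Ff"
| "pos_br Aa Cc = delta Hh"
| "pos_br Bb Uu = delta Hh"
| "pos_br Bb Yy = delta Hh"
| "pos_br Xx Uu = delta Ff"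
| "pos_br Xx Yy = delta Hh"
| "pos_br _ _ = (\<lambda>_. 0)"

definition basis_br :: "bidx \<Rightarrow> bidx \<Rightarrow> ('k::field) vec" where
  "basis_br p q = (\<lambda>r. pos_br p q r - pos_br q p r)"

definition lie :: "nat \<Rightarrow> ('k::field) vec \<Rightarrow> 'k vec \<Rightarrow> 'k vec" where
  "lie n v w = (\<lambda>r. \<Sum>p\<in>valid_idx n. \<Sum>q\<in>valid_idx n. v p * w q * basis_br p q r)"

definition vadd :: "('k::field) vec \<Rightarrow> 'k vec \<Rightarrow> 'k vec" where
  "vadd v w = (\<lambda>r. v r + w r)"

definition vscale :: "'k::field \<Rightarrow> 'k vec \<Rightarrow> 'k vec" where
  "vscale c v = (\<lambda>r. c * v r)"

definition is_derivation :: "nat \<Rightarrow> (('k::field) vec \<Rightarrow> 'k vec) \<Rightarrow> bool" where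
  "is_derivation n D \<longleftrightarrow>
     (\<forall>v\<in>nspace n. D v \<in> nspace n) \<and>
     (\<forall>v\<in>nspace n. \<forall>w\<in>nspace n. D (vadd v w) = vadd (D v) (D w)) \<and>
     (\<forall>c. \<forall>v\<in>nspace n. D (vscale c v) = vscale c (D v)) \<and>
     (\<forall>v\<in>nspace n. \<forall>w\<in>nspace n. D (lie n v w) = vadd (lie n (D v) w) (lie n v (D w)))"

definition Espace :: "nat \<Rightarrow> ('k::field) vec set" where
  "Espace n = {v \<in> nspace n. \<forall>r. (\<forall>i. r \<noteq> Ee i) \<longrightarrow> v r = 0}"

text \<open>Der(n)_1: derivations D with D(E) contained in W (W = span of all non-e basis vectors).\<close>
definition Der1 :: "nat \<Rightarrow> (('k::field) vec \<Rightarrow> 'k vec) set" where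
  "Der1 n = {D. is_derivation n D \<and> (\<forall>v\<in>Espace n. \<forall>i. D v (Ee i) = 0)}"

definition is_basis_E :: "nat \<Rightarrow> (nat \<Rightarrow> ('k::field) vec) \<Rightarrow> bool" where
  "is_basis_E n b \<longleftrightarrow>
     (\<forall>i\<in>{1..n}. b i \<in> Espace n) \<and>
     (\<forall>c. (\<lambda>r. \<Sum>i=1..n. c i * b i r) = (\<lambda>_. 0) \<longrightarrow> (\<forall>i\<in>{1..n}. c i = 0)) \<and>
     (\<forall>v\<in>Espace n. \<exists>c. v = (\<lambda>r. \<Sum>i=1..n. c i * b i r))"

definition frakB :: "nat \<Rightarrow> (nat \<Rightarrow> ('k::field) vec) \<Rightarrow> 'k vec list" where
  "frakB n b =
     map b [1..<n+1]
     @ [delta Aa, delta Bb, delta Xx, delta Uu, delta Yy]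
     @ [lie n (b i) (b j). i \<leftarrow> [1..<n+1], j \<leftarrow> [i+1..<n+1]]
     @ [delta Cc]
     @ map (\<lambda>i. lie n (b i) (delta Xx)) [1..<n+1]
     @ map (\<lambda>i. lie n (b i) (delta Uu)) [1..<n+1]
     @ map (\<lambda>i. lie n (b i) (delta Yy)) [1..<n+1]
     @ [delta Ff, delta Hh]"

end

theory Submission
  imports Defs
begin

text \<open>
  A derivation \<open>D\<close> of \<open>\<frak>n\<close> with \<open>D(E) \<subseteq> W\<close> is first shown to have further vanishing
  coordinates on the generators: applying \<open>D\<close> to the relations \<open>f = [a,y] = [x,u]\<close>,
  \<open>h = [a,c] = [b,u] = [b,y] = [x,y]\<close>, \<open>c = [a,b]\<close> and to the vanishing brackets
  \<open>[x,a], [x,b], [u,a], [u,c], [y,c], [u,y]\<close>, and comparing coordinates, one finds that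
  \<open>D(g)\<close> has no component along \<open>E\<close> or along a generator preceding \<open>g\<close> in
  \<open>a, b, x, u, y\<close>. The \<open>e'\<^sub>i\<close> are handled by \<open>D(E) \<subseteq> W\<close>; every remaining element of
  \<open>\<frak>B(B)\<close> is a bracket, and by the Leibniz rule its image under \<open>D\<close> is a sum of brackets
  with no coordinates before it. Membership in the span of a tail of \<open>\<frak>B(B)\<close> can be read
  off from coordinates in the standard basis, because \<open>e\<^sub>i\<and>e\<^sub>j, x\<^sub>i, u\<^sub>i, y\<^sub>i\<close> are combinations of the primed vectors of the same block.
\<close>

section \<open>The bracket in coordinates\<close>

fun bracket_sources :: "bidx \<Rightarrow> (bidx \<times> bidx) set" where
  "bracket_sources (Wedge i j) = (if i < j then {(Ee i, Ee j)} else {})"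
| "bracket_sources (Xs i) = {(Ee i, Xx)}"
| "bracket_sources (Us i) = {(Ee i, Uu)}"
| "bracket_sources (Ys i) = {(Ee i, Yy)}"
| "bracket_sources Cc = {(Aa, Bb)}"
| "bracket_sources Ff = {(Aa, Yy), (Xx, Uu)}"
| "bracket_sources Hh = {(Aa, Cc), (Bb, Uu), (Bb, Yy), (Xx, Yy)}"
| "bracket_sources _ = {}"

lemma pos_br_eq_indicator: "pos_br p q r = (if (p, q) \<in> bracket_sources r then 1 else 0)"
  by (cases r; cases p; cases q) (auto simp: delta_def)

lemma finite_bracket_sources [simp]: "finite (bracket_sources r)"
  by (cases r) auto

lemma valid_idx_simps [simp]:
  "Ee i \<in> valid_idx n \<longleftrightarrow> 1 \<le> i \<and> i \<le> n"
  "Aa \<in> valid_idx n" "Bb \<in> valid_idx n" "Xx \<in> valid_idx n" "Uu \<in> valid_idx n" "Yy \<in> valid_idx n"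
  "Cc \<in> valid_idx n" "Ff \<in> valid_idx n" "Hh \<in> valid_idx n"
  "Wedge i j \<in> valid_idx n \<longleftrightarrow> 1 \<le> i \<and> i < j \<and> j \<le> n"
  "Xs i \<in> valid_idx n \<longleftrightarrow> 1 \<le> i \<and> i \<le> n"
  "Us i \<in> valid_idx n \<longleftrightarrow> 1 \<le> i \<and> i \<le> n"
  "Ys i \<in> valid_idx n \<longleftrightarrow> 1 \<le> i \<and> i \<le> n"
  by (simp_all add: valid_idx_def)

lemma finite_valid_idx [simp]: "finite (valid_idx n)"
proof (rule finite_subset)
  show "valid_idx n \<subseteq> Ee ` {..n} \<union> {Aa, Bb, Xx, Uu, Yy, Cc, Ff, Hh}
      \<union> case_prod Wedge ` ({..n} \<times> {..n}) \<union> Xs ` {..n} \<union> Us ` {..n} \<union> Ys ` {..n}"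
    by (auto simp: valid_idx_def)
qed auto

lemma bracket_sources_valid_iff:
  "(p, q) \<in> bracket_sources r \<Longrightarrow> r \<in> valid_idx n \<longleftrightarrow> p \<in> valid_idx n \<and> q \<in> valid_idx n"
  by (cases r) (auto split: if_splits)

lemma delta_apply: "delta q r = (if r = q then 1 else 0)"
  by (simp add: delta_def)

lemma delta_in_nspace: "s \<in> valid_idx n \<Longrightarrow> delta s \<in> nspace n"
  by (auto simp: nspace_def delta_def)

lemma nspace_outside: "v \<in> nspace n \<Longrightarrow> r \<notin> valid_idx n \<Longrightarrow> v r = 0"
  by (simp add: nspace_def)

lemma sum_sum_indicator:
  fixes f :: "'a \<Rightarrow> 'a \<Rightarrow> 'k::field"
  assumes "finite A" "S \<subseteq> A \<times> A"
  shows "(\<Sum>p\<in>A. \<Sum>q\<in>A. f p q * (if (p, q) \<in> S then 1 else 0)) = (\<Sum>(p, q)\<in>S. f p q)"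
proof -
  have "(\<Sum>p\<in>A. \<Sum>q\<in>A. f p q * (if (p, q) \<in> S then 1 else 0))
      = (\<Sum>x\<in>A \<times> A. if x \<in> S then case_prod f x else 0)"
    by (subst sum.cartesian_product) (auto intro!: sum.cong)
  also have "\<dots> = sum (case_prod f) ((A \<times> A) \<inter> S)"
    using assms(1) by (simp add: sum.inter_restrict)
  finally show ?thesis
    using assms(2) by (simp add: Int_absorb1)
qed

lemma lie_apply:
  "lie n v w r =
     (if r \<in> valid_idx n then \<Sum>(p, q)\<in>bracket_sources r. v p * w q - v q * w p else 0)"
proof (cases "r \<in> valid_idx n")
  case True
  let ?V = "valid_idx n" and ?S = "bracket_sources r"
  have S: "?S \<subseteq> ?V \<times> ?V"
    using True by (auto dest: bracket_sources_valid_iff[of _ _ r n])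
  have swap: "(\<Sum>p\<in>?V. \<Sum>q\<in>?V. v p * w q * (if (q, p) \<in> ?S then 1 else 0))
      = (\<Sum>q\<in>?V. \<Sum>p\<in>?V. v p * w q * (if (q, p) \<in> ?S then 1 else 0))"
    by (rule sum.swap)
  have "lie n v w r = (\<Sum>p\<in>?V. \<Sum>q\<in>?V. v p * w q * (if (p, q) \<in> ?S then 1 else 0))
      - (\<Sum>p\<in>?V. \<Sum>q\<in>?V. v p * w q * (if (q, p) \<in> ?S then 1 else 0))"
    by (simp add: lie_def basis_br_def pos_br_eq_indicator right_diff_distrib sum_subtractf)
  also have "\<dots> = (\<Sum>(p, q)\<in>?S. v p * w q) - (\<Sum>(q, p)\<in>?S. v p * w q)"
    by (simp only: swap sum_sum_indicator[OF finite_valid_idx S])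
  finally show ?thesis
    using True by (simp add: sum_subtractf case_prod_beta')
next
  case False
  then show ?thesis
    unfolding lie_def basis_br_def
    by (auto intro!: sum.neutral simp: pos_br_eq_indicator dest: bracket_sources_valid_iff)
qed

lemma lie_in_nspace: "lie n v w \<in> nspace n"
  by (simp add: nspace_def lie_apply)

lemma lie_antisym: "lie n w v = (\<lambda>r. - lie n v w r)"
  by (rule ext) (simp add: lie_apply case_prod_beta' mult.commute flip: sum_negf)

lemma lie_self: "lie n v v = (\<lambda>_. 0)"
  by (rule ext) (simp add: lie_apply mult.commute case_prod_beta')

lemma sum_delta_pair:
  assumes "finite S"
  shows "(\<Sum>(x, y)\<in>S. delta p x * delta q y) = (if (p, q) \<in> S then 1 else 0)"
proof -
  have "(\<Sum>(x, y)\<in>S. delta p x * delta q y) = (\<Sum>z\<in>S. if z = (p, q) then 1 else 0)"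
    by (rule sum.cong) (auto simp: delta_apply split: if_splits)
  then show ?thesis
    using assms by simp
qed

lemma lie_delta:
  assumes "p \<in> valid_idx n" "q \<in> valid_idx n"
  shows "lie n (delta p) (delta q) = basis_br p q"
proof
  fix r
  have "(\<Sum>(x, y)\<in>bracket_sources r. delta p x * delta q y - delta p y * delta q x)
      = (\<Sum>(x, y)\<in>bracket_sources r. delta p x * delta q y)
        - (\<Sum>(x, y)\<in>bracket_sources r. delta q x * delta p y)"
    by (simp add: sum_subtractf case_prod_beta' mult.commute)
  also have "\<dots> = pos_br p q r - pos_br q p r"
    by (simp add: sum_delta_pair pos_br_eq_indicator)
  finally have coord: "(\<Sum>(x, y)\<in>bracket_sources r. delta p x * delta q y - delta p y * delta q x)
      = pos_br p q r - pos_br q p r" .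
  show "lie n (delta p) (delta q) r = basis_br p q r"
    using assms coord by (auto simp: lie_apply basis_br_def pos_br_eq_indicator
        dest: bracket_sources_valid_iff)
qed

lemma lie_sum_left:
  "lie n (\<lambda>r. \<Sum>i\<in>I. c i * u i r) w = (\<lambda>r. \<Sum>i\<in>I. c i * lie n (u i) w r)"
proof
  fix r
  have "lie n (\<lambda>r. \<Sum>i\<in>I. c i * u i r) w r
      = (\<Sum>p\<in>valid_idx n. \<Sum>q\<in>valid_idx n. \<Sum>i\<in>I. c i * (u i p * w q * basis_br p q r))"
    by (simp add: lie_def sum_distrib_right mult.assoc)
  also have "\<dots> = (\<Sum>p\<in>valid_idx n. \<Sum>i\<in>I. \<Sum>q\<in>valid_idx n. c i * (u i p * w q * basis_br p q r))"
    by (rule sum.cong[OF refl], rule sum.swap)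
  also have "\<dots> = (\<Sum>i\<in>I. \<Sum>p\<in>valid_idx n. \<Sum>q\<in>valid_idx n. c i * (u i p * w q * basis_br p q r))"
    by (rule sum.swap)
  also have "\<dots> = (\<Sum>i\<in>I. c i * lie n (u i) w r)"
    by (simp add: lie_def sum_distrib_left)
  finally show "lie n (\<lambda>r. \<Sum>i\<in>I. c i * u i r) w r = (\<Sum>i\<in>I. c i * lie n (u i) w r)" .
qed

lemma Espace_coord: "e \<in> Espace n \<Longrightarrow> \<forall>i. s \<noteq> Ee i \<Longrightarrow> e s = 0"
  by (simp add: Espace_def)

lemma lie_Espace_left:
  assumes "e \<in> Espace n" "\<And>q. w (Ee q) = 0"
  shows "lie n e w = (\<lambda>r. w Xx * lie n e (delta Xx) r + w Uu * lie n e (delta Uu) r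
    + w Yy * lie n e (delta Yy) r)"
proof
  fix r
  show "lie n e w r = w Xx * lie n e (delta Xx) r + w Uu * lie n e (delta Uu) r
    + w Yy * lie n e (delta Yy) r"
    using assms by (cases r) (auto simp: lie_apply delta_apply Espace_coord algebra_simps)
qed

lemma basis_br_nonzero:
  "basis_br Aa Bb = delta Cc" "basis_br Aa Yy = delta Ff" "basis_br Aa Cc = delta Hh"
  "basis_br Bb Uu = delta Hh" "basis_br Bb Yy = delta Hh" "basis_br Xx Uu = delta Ff"
  "basis_br Xx Yy = delta Hh"
  by (simp_all add: basis_br_def)

lemma basis_br_zero:
  "basis_br Xx Aa = (\<lambda>_. 0)" "basis_br Xx Bb = (\<lambda>_. 0)" "basis_br Uu Aa = (\<lambda>_. 0)"
  "basis_br Uu Cc = (\<lambda>_. 0)" "basis_br Yy Cc = (\<lambda>_. 0)" "basis_br Uu Yy = (\<lambda>_. 0)"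
  by (simp_all add: basis_br_def)

lemmas lie_coord_simps = basis_br_nonzero basis_br_zero lie_apply delta_apply

lemma basis_in_Espace: "is_basis_E n b \<Longrightarrow> 1 \<le> i \<Longrightarrow> i \<le> n \<Longrightarrow> b i \<in> Espace n"
  by (simp add: is_basis_E_def)

section \<open>Spans of tails of a list of vectors\<close>

definition tail_span :: "('k::field) vec list \<Rightarrow> nat \<Rightarrow> 'k vec set" where
  "tail_span vs k = {v. \<exists>c. v = (\<lambda>r. \<Sum>j\<in>{k..<length vs}. c j * (vs ! j) r)}"

lemma zero_in_tail_span: "(\<lambda>_. 0) \<in> tail_span vs k"
  unfolding tail_span_def by (rule CollectI, rule exI[of _ "\<lambda>_. 0"]) simp

lemma tail_span_add:
  assumes "v \<in> tail_span vs k" "w \<in> tail_span vs k"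
  shows "(\<lambda>r. v r + w r) \<in> tail_span vs k"
proof -
  obtain c d where "v = (\<lambda>r. \<Sum>j\<in>{k..<length vs}. c j * (vs ! j) r)"
    and "w = (\<lambda>r. \<Sum>j\<in>{k..<length vs}. d j * (vs ! j) r)"
    using assms by (auto simp: tail_span_def)
  then have "(\<lambda>r. v r + w r) = (\<lambda>r. \<Sum>j\<in>{k..<length vs}. (c j + d j) * (vs ! j) r)"
    by (simp add: sum.distrib distrib_right)
  then show ?thesis
    by (auto simp: tail_span_def)
qed

lemma tail_span_scale:
  assumes "a \<noteq> 0 \<Longrightarrow> v \<in> tail_span vs k"
  shows "(\<lambda>r. a * v r) \<in> tail_span vs k"
proof (cases "a = 0")
  case False
  then obtain c where "v = (\<lambda>r. \<Sum>j\<in>{k..<length vs}. c j * (vs ! j) r)"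
    using assms by (auto simp: tail_span_def)
  then have "(\<lambda>r. a * v r) = (\<lambda>r. \<Sum>j\<in>{k..<length vs}. (a * c j) * (vs ! j) r)"
    by (simp add: sum_distrib_left mult.assoc)
  then show ?thesis
    by (auto simp: tail_span_def)
qed (simp add: zero_in_tail_span)

lemma tail_span_uminus: "v \<in> tail_span vs k \<Longrightarrow> (\<lambda>r. - v r) \<in> tail_span vs k"
  using tail_span_scale[of "-1" v vs k] by simp

lemma tail_span_lincomb:
  assumes "finite I" "\<And>i. i \<in> I \<Longrightarrow> c i \<noteq> 0 \<Longrightarrow> u i \<in> tail_span vs k"
  shows "(\<lambda>r. \<Sum>i\<in>I. c i * u i r) \<in> tail_span vs k"
  using assms
proof (induction I rule: finite_induct)
  case empty
  then show ?case
    by (simp add: zero_in_tail_span)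
next
  case (insert i I)
  then show ?case
    using tail_span_add[OF tail_span_scale[of "c i" "u i" vs k]] by simp
qed

lemma nth_in_tail_span:
  assumes "k \<le> j" "j < length vs" "vs ! j = x"
  shows "x \<in> tail_span vs k"
proof -
  have "(\<Sum>i\<in>{k..<length vs}. (if i = j then 1 else 0) * (vs ! i) r)
      = (\<Sum>i\<in>{k..<length vs}. if i = j then (vs ! j) r else 0)" for r
    by (rule sum.cong) auto
  then have "x = (\<lambda>r. \<Sum>i\<in>{k..<length vs}. (if i = j then 1 else 0) * (vs ! i) r)"
    using assms by auto
  then show ?thesis
    by (auto simp: tail_span_def)
qed

lemma tail_span_antimono:
  assumes "k \<le> k'" "v \<in> tail_span vs k'"
  shows "v \<in> tail_span vs k"
proof -
  obtain c where v: "v = (\<lambda>r. \<Sum>j\<in>{k'..<length vs}. c j * (vs ! j) r)"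
    using assms(2) by (auto simp: tail_span_def)
  have "(\<Sum>j\<in>{k'..<length vs}. c j * (vs ! j) r)
      = (\<Sum>j\<in>{k..<length vs}. (if k' \<le> j then c j else 0) * (vs ! j) r)" for r
    using assms(1) by (intro sum.mono_neutral_cong_left) auto
  then have "v = (\<lambda>r. \<Sum>j\<in>{k..<length vs}. (if k' \<le> j then c j else 0) * (vs ! j) r)"
    using v by auto
  then show ?thesis
    by (auto simp: tail_span_def)
qed

definition wedges :: "nat \<Rightarrow> (nat \<Rightarrow> ('k::field) vec) \<Rightarrow> 'k vec list" where
  "wedges n b = [lie n (b i) (b j). i \<leftarrow> [1..<n+1], j \<leftarrow> [i+1..<n+1]]"

definition Cc_index :: "nat \<Rightarrow> (nat \<Rightarrow> ('k::field) vec) \<Rightarrow> nat" where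
  "Cc_index n b = n + 5 + length (wedges n b)"

lemma set_wedges:
  "set (wedges n b) = {lie n (b i) (b j) | i j. 1 \<le> i \<and> i < j \<and> j \<le> n}"
  by (auto simp: wedges_def image_iff simp del: upt_Suc) force+

lemma frakB_eq: "frakB n b = map b [1..<n+1]
     @ [delta Aa, delta Bb, delta Xx, delta Uu, delta Yy]
     @ wedges n b
     @ [delta Cc]
     @ map (\<lambda>i. lie n (b i) (delta Xx)) [1..<n+1]
     @ map (\<lambda>i. lie n (b i) (delta Uu)) [1..<n+1]
     @ map (\<lambda>i. lie n (b i) (delta Yy)) [1..<n+1]
     @ [delta Ff, delta Hh]"
  by (simp add: frakB_def wedges_def)

lemma length_frakB: "length (frakB n b) = Cc_index n b + 3 * n + 3"
  by (simp add: frakB_eq Cc_index_def del: upt_Suc)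

lemma frakB_nth_E: "1 \<le> i \<Longrightarrow> i \<le> n \<Longrightarrow> frakB n b ! (i - 1) = b i"
  by (auto simp: frakB_eq nth_append simp del: upt_Suc)

lemma frakB_nth_generators:
  "frakB n b ! n = delta Aa" "frakB n b ! (n + 1) = delta Bb" "frakB n b ! (n + 2) = delta Xx"
  "frakB n b ! (n + 3) = delta Uu" "frakB n b ! (n + 4) = delta Yy"
  by (simp_all add: frakB_eq nth_append del: upt_Suc)

lemma frakB_nth_wedges: "t < length (wedges n b) \<Longrightarrow> frakB n b ! (n + 5 + t) = wedges n b ! t"
  by (auto simp: frakB_eq nth_append simp del: upt_Suc)

lemma frakB_nth_Cc: "frakB n b ! Cc_index n b = delta Cc"
  by (simp add: frakB_eq nth_append Cc_index_def del: upt_Suc)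

lemma frakB_nth_brackets:
  assumes "1 \<le> i" "i \<le> n"
  shows "frakB n b ! (Cc_index n b + i) = lie n (b i) (delta Xx)"
    and "frakB n b ! (Cc_index n b + n + i) = lie n (b i) (delta Uu)"
    and "frakB n b ! (Cc_index n b + 2 * n + i) = lie n (b i) (delta Yy)"
  using assms by (auto simp: frakB_eq nth_append Cc_index_def simp del: upt_Suc)

lemma frakB_nth_Ff_Hh:
  "frakB n b ! (Cc_index n b + 3 * n + 1) = delta Ff"
  "frakB n b ! (Cc_index n b + 3 * n + 2) = delta Hh"
  by (simp_all add: frakB_eq nth_append Cc_index_def del: upt_Suc)

lemma frakB_nth_cases:
  assumes "k < length (frakB n b)"
  obtains (E) i where "1 \<le> i" "i \<le> n" "k = i - 1" "frakB n b ! k = b i"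
  | (Aa) "k = n" "frakB n b ! k = delta Aa"
  | (Bb) "k = n + 1" "frakB n b ! k = delta Bb"
  | (Xx) "k = n + 2" "frakB n b ! k = delta Xx"
  | (Uu) "k = n + 3" "frakB n b ! k = delta Uu"
  | (Yy) "k = n + 4" "frakB n b ! k = delta Yy"
  | (Wedge) i j where "1 \<le> i" "i < j" "j \<le> n" "k < Cc_index n b"
      "frakB n b ! k = lie n (b i) (b j)"
  | (Cc) "k = Cc_index n b" "frakB n b ! k = delta Cc"
  | (Xs) i where "1 \<le> i" "i \<le> n" "k = Cc_index n b + i" "frakB n b ! k = lie n (b i) (delta Xx)"
  | (Us) i where "1 \<le> i" "i \<le> n" "k = Cc_index n b + n + i"
      "frakB n b ! k = lie n (b i) (delta Uu)"
  | (Ys) i where "1 \<le> i" "i \<le> n" "k = Cc_index n b + 2 * n + i"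
      "frakB n b ! k = lie n (b i) (delta Yy)"
  | (Ff) "k = Cc_index n b + 3 * n + 1" "frakB n b ! k = delta Ff"
  | (Hh) "k = Cc_index n b + 3 * n + 2" "frakB n b ! k = delta Hh"
proof -
  let ?C = "Cc_index n b"
  consider "k < n" | "n \<le> k" "k < n + 5" | "n + 5 \<le> k" "k < ?C" | "k = ?C"
    | "?C < k" "k \<le> ?C + n" | "?C + n < k" "k \<le> ?C + 2 * n" | "?C + 2 * n < k" "k \<le> ?C + 3 * n"
    | "k = ?C + 3 * n + 1" | "k = ?C + 3 * n + 2"
    using assms by (fastforce simp: length_frakB)
  then show thesis
  proof cases
    case 1
    then show thesis
      using E[of "k + 1"] frakB_nth_E[of "k + 1" n b] by simp
  next
    case 2
    then consider "k = n" | "k = n + 1" | "k = n + 2" | "k = n + 3" | "k = n + 4"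
      by linarith
    then show thesis
      using Aa Bb Xx Uu Yy frakB_nth_generators[of n b] by cases simp_all
  next
    case 3
    then have t: "k - (n + 5) < length (wedges n b)"
      by (simp add: Cc_index_def)
    then have "frakB n b ! k \<in> set (wedges n b)"
      using frakB_nth_wedges[OF t] 3 by simp
    then show thesis
      using Wedge 3 by (auto simp: set_wedges)
  next
    case 5
    then show thesis
      using Xs[of "k - ?C"] frakB_nth_brackets(1)[of "k - ?C" n b] by simp
  next
    case 6
    then show thesis
      using Us[of "k - ?C - n"] frakB_nth_brackets(2)[of "k - ?C - n" n b] by simp
  next
    case 7
    then show thesis
      using Ys[of "k - ?C - 2 * n"] frakB_nth_brackets(3)[of "k - ?C - 2 * n" n b] by simp
  qed (use Cc Ff Hh frakB_nth_Cc[of n b] frakB_nth_Ff_Hh[of n b] in simp_all)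
qed

lemma wedge_in_tail_span:
  assumes "x \<in> set (wedges n b)"
  shows "x \<in> tail_span (frakB n b) (n + 5)"
proof -
  obtain t where t: "t < length (wedges n b)" "x = wedges n b ! t"
    using assms by (auto simp: in_set_conv_nth)
  then show ?thesis
    by (intro nth_in_tail_span[of "n + 5" "n + 5 + t"])
      (simp_all add: frakB_nth_wedges length_frakB Cc_index_def)
qed

lemma lie_basis_in_tail_span:
  assumes "1 \<le> i" "i \<le> n" "1 \<le> j" "j \<le> n"
  shows "lie n (b i) (b j) \<in> tail_span (frakB n b) (n + 5)"
proof -
  consider "i < j" | "i = j" | "j < i"
    by linarith
  then show ?thesis
  proof cases
    case 1
    then show ?thesis
      using assms wedge_in_tail_span by (fastforce simp: set_wedges)
  next
    case 2
    then show ?thesis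
      by (simp add: lie_self zero_in_tail_span)
  next
    case 3
    then have "lie n (b j) (b i) \<in> tail_span (frakB n b) (n + 5)"
      using assms wedge_in_tail_span by (fastforce simp: set_wedges)
    then show ?thesis
      unfolding lie_antisym[of n "b i"] by (rule tail_span_uminus)
  qed
qed

lemma lie_delta_Ee_in_tail_span:
  assumes "is_basis_E n b" "1 \<le> p" "p \<le> n"
    and "\<And>i. 1 \<le> i \<Longrightarrow> i \<le> n \<Longrightarrow> lie n (b i) w \<in> tail_span (frakB n b) k"
  shows "lie n (delta (Ee p)) w \<in> tail_span (frakB n b) k"
proof -
  have "delta (Ee p) \<in> Espace n"
    using assms(2,3) by (auto simp: Espace_def nspace_def delta_def)
  then obtain c where "delta (Ee p) = (\<lambda>r. \<Sum>i=1..n. c i * b i r)"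
    using assms(1) unfolding is_basis_E_def by blast
  then have "lie n (delta (Ee p)) w = (\<lambda>r. \<Sum>i=1..n. c i * lie n (b i) w r)"
    by (simp only: lie_sum_left)
  also have "\<dots> \<in> tail_span (frakB n b) k"
    using assms(4) by (intro tail_span_lincomb) auto
  finally show ?thesis .
qed

definition frakB_level :: "nat \<Rightarrow> (nat \<Rightarrow> ('k::field) vec) \<Rightarrow> bidx \<Rightarrow> nat" where
  "frakB_level n b s = (case s of Ee _ \<Rightarrow> 0 | Aa \<Rightarrow> n | Bb \<Rightarrow> n + 1 | Xx \<Rightarrow> n + 2 | Uu \<Rightarrow> n + 3
     | Yy \<Rightarrow> n + 4 | Wedge _ _ \<Rightarrow> n + 5 | Cc \<Rightarrow> Cc_index n b
     | Xs _ \<Rightarrow> Cc_index n b + 1 | Us _ \<Rightarrow> Cc_index n b + 1 | Ys _ \<Rightarrow> Cc_index n b + 1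
     | Ff \<Rightarrow> Cc_index n b + 3 * n + 1 | Hh \<Rightarrow> Cc_index n b + 3 * n + 2)"

lemma frakB_nth_level:
  assumes "s \<in> {Aa, Bb, Xx, Uu, Yy, Cc, Ff, Hh}"
  shows "frakB_level n b s < length (frakB n b)" "frakB n b ! frakB_level n b s = delta s"
  using assms by (auto simp: frakB_level_def frakB_eq nth_append Cc_index_def simp del: upt_Suc)

lemma delta_Wedge_in_tail_span:
  assumes b: "is_basis_E n b" and pq: "1 \<le> p" "p < q" "q \<le> n"
  shows "delta (Wedge p q) \<in> tail_span (frakB n b) (n + 5)"
proof -
  have "lie n (b i) (delta (Ee q)) \<in> tail_span (frakB n b) (n + 5)" if "1 \<le> i" "i \<le> n" for i
  proof -
    have "lie n (delta (Ee q)) (b i) \<in> tail_span (frakB n b) (n + 5)"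
      using pq that by (intro lie_delta_Ee_in_tail_span[OF b] lie_basis_in_tail_span) auto
    then show ?thesis
      unfolding lie_antisym[of n "b i"] by (rule tail_span_uminus)
  qed
  then have "lie n (delta (Ee p)) (delta (Ee q)) \<in> tail_span (frakB n b) (n + 5)"
    using pq by (intro lie_delta_Ee_in_tail_span[OF b]) auto
  then show ?thesis
    using pq by (simp add: lie_delta basis_br_def)
qed

lemma delta_Xs_Us_Ys_in_tail_span:
  assumes b: "is_basis_E n b" and p: "1 \<le> p" "p \<le> n"
  shows "delta (Xs p) \<in> tail_span (frakB n b) (Cc_index n b + 1)"
    and "delta (Us p) \<in> tail_span (frakB n b) (Cc_index n b + 1)"
    and "delta (Ys p) \<in> tail_span (frakB n b) (Cc_index n b + 1)"
proof -
  have "lie n (delta (Ee p)) (delta z) \<in> tail_span (frakB n b) (Cc_index n b + 1)"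
    if "z \<in> {Xx, Uu, Yy}" for z
  proof (rule lie_delta_Ee_in_tail_span[OF b p])
    fix i assume i: "1 \<le> i" "i \<le> n"
    have "Cc_index n b + 1 \<le> Cc_index n b + i" "Cc_index n b + 2 * n + i < length (frakB n b)"
      using i by (simp_all add: length_frakB)
    then show "lie n (b i) (delta z) \<in> tail_span (frakB n b) (Cc_index n b + 1)"
      using that nth_in_tail_span[OF _ _ frakB_nth_brackets(1)[OF i, of b]]
        nth_in_tail_span[OF _ _ frakB_nth_brackets(2)[OF i, of b]]
        nth_in_tail_span[OF _ _ frakB_nth_brackets(3)[OF i, of b]]
      by auto
  qed
  from this[of Xx] this[of Uu] this[of Yy]
  show "delta (Xs p) \<in> tail_span (frakB n b) (Cc_index n b + 1)"
    and "delta (Us p) \<in> tail_span (frakB n b) (Cc_index n b + 1)"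
    and "delta (Ys p) \<in> tail_span (frakB n b) (Cc_index n b + 1)"
    using p by (simp_all add: lie_delta basis_br_def)
qed

lemma delta_in_tail_span:
  assumes b: "is_basis_E n b" and s: "s \<in> valid_idx n" "\<forall>i. s \<noteq> Ee i"
  shows "delta s \<in> tail_span (frakB n b) (frakB_level n b s)"
proof -
  consider "s \<in> {Aa, Bb, Xx, Uu, Yy, Cc, Ff, Hh}" | p q where "s = Wedge p q"
    | p where "s = Xs p" | p where "s = Us p" | p where "s = Ys p"
    using s by (cases s) auto
  then show ?thesis
  proof cases
    case 1
    show ?thesis
      by (rule nth_in_tail_span[OF order.refl frakB_nth_level[OF 1]])
  qed (use s delta_Wedge_in_tail_span[OF b] delta_Xs_Us_Ys_in_tail_span[OF b] in
      \<open>simp_all add: frakB_level_def\<close>)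
qed

lemma nspace_expansion: "v \<in> nspace n \<Longrightarrow> v = (\<lambda>r. \<Sum>s\<in>valid_idx n. v s * delta s r)"
  by (rule ext) (auto simp: delta_apply nspace_def if_distrib cong: if_cong)

lemma in_tail_span_by_coords:
  assumes "is_basis_E n b" "v \<in> nspace n"
    and "\<And>s. s \<in> valid_idx n \<Longrightarrow> v s \<noteq> 0 \<Longrightarrow> (\<forall>i. s \<noteq> Ee i) \<and> k \<le> frakB_level n b s"
  shows "v \<in> tail_span (frakB n b) k"
proof -
  have "(\<lambda>r. \<Sum>s\<in>valid_idx n. v s * delta s r) \<in> tail_span (frakB n b) k"
  proof (rule tail_span_lincomb)
    fix s assume s: "s \<in> valid_idx n" "v s \<noteq> 0"
    then have "\<forall>i. s \<noteq> Ee i" "k \<le> frakB_level n b s"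
      using assms(3) by auto
    then show "delta s \<in> tail_span (frakB n b) k"
      using tail_span_antimono delta_in_tail_span[OF assms(1) s(1)] by blast
  qed simp
  then show ?thesis
    using nspace_expansion[OF assms(2)] by simp
qed

section \<open>Coordinates of a derivation on the generators\<close>

context
  fixes n :: nat and D :: "('k::field) vec \<Rightarrow> 'k vec"
  assumes der: "D \<in> Der1 n"
begin

lemma der_in_nspace: "v \<in> nspace n \<Longrightarrow> D v \<in> nspace n"
  using der by (simp add: Der1_def is_derivation_def)

lemma der_leibniz:
  "v \<in> nspace n \<Longrightarrow> w \<in> nspace n \<Longrightarrow> D (lie n v w) = vadd (lie n (D v) w) (lie n v (D w))"
  using der by (simp add: Der1_def is_derivation_def)

lemma der_Espace_coord: "v \<in> Espace n \<Longrightarrow> D v (Ee i) = 0"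
  using der by (simp add: Der1_def)

lemma der_zero: "D (\<lambda>_. 0) = (\<lambda>_. 0)"
proof -
  have "D (vscale 0 (delta Aa)) = vscale 0 (D (delta Aa))"
    using der delta_in_nspace[OF valid_idx_simps(2)] unfolding Der1_def is_derivation_def by blast
  then show ?thesis
    by (simp add: vscale_def)
qed

lemma der_delta_outside: "s \<in> valid_idx n \<Longrightarrow> r \<notin> valid_idx n \<Longrightarrow> D (delta s) r = 0"
  by (rule nspace_outside[OF der_in_nspace[OF delta_in_nspace]])

lemma der_basis_br:
  assumes "p \<in> valid_idx n" "q \<in> valid_idx n"
  shows "D (basis_br p q) r = lie n (D (delta p)) (delta q) r + lie n (delta p) (D (delta q)) r"
proof -
  have "D (basis_br p q) = vadd (lie n (D (delta p)) (delta q)) (lie n (delta p) (D (delta q)))"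
    using der_leibniz[OF delta_in_nspace delta_in_nspace, OF assms] by (simp only: lie_delta[OF assms])
  then show ?thesis
    by (simp add: vadd_def)
qed

lemma der_Cc_coords:
  "D (delta Cc) Aa = 0" "D (delta Cc) Bb = 0" "D (delta Cc) Xx = 0" "D (delta Cc) Uu = 0"
  "D (delta Cc) Yy = 0"
  using der_basis_br[of Aa Bb] by (simp_all add: lie_coord_simps)

lemma der_Hh_Ff: "D (delta Hh) Ff = 0"
  using der_basis_br[of Aa Cc Ff] by (simp add: lie_coord_simps der_Cc_coords)

lemma der_Aa_coords: "D (delta Aa) (Ee j) = 0"
proof (cases "1 \<le> j \<and> j \<le> n")
  case True
  then have "D (delta Ff) (Ys j) = D (delta Aa) (Ee j)" "D (delta Ff) (Ys j) = 0"
    using der_basis_br[of Aa Yy "Ys j"] der_basis_br[of Xx Uu "Ys j"]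
    by (simp_all add: lie_coord_simps)
  then show ?thesis
    by simp
qed (simp add: der_delta_outside)

lemma der_Bb_coords: "D (delta Bb) (Ee j) = 0" "D (delta Bb) Aa = 0" "D (delta Bb) Xx = 0"
proof -
  show "D (delta Bb) (Ee j) = 0"
  proof (cases "1 \<le> j \<and> j \<le> n")
    case True
    then have "D (delta Hh) (Us j) = D (delta Bb) (Ee j)" "D (delta Hh) (Us j) = 0"
      using der_basis_br[of Bb Uu "Us j"] der_basis_br[of Aa Cc "Us j"]
      by (simp_all add: lie_coord_simps)
    then show ?thesis
      by simp
  qed (simp add: der_delta_outside)
  show "D (delta Bb) Aa = 0"
    using der_basis_br[of Bb Yy Ff] der_Hh_Ff by (simp add: lie_coord_simps)
  show "D (delta Bb) Xx = 0"
    using der_basis_br[of Bb Uu Ff] der_Hh_Ff by (simp add: lie_coord_simps)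
qed

lemma der_Xx_coords: "D (delta Xx) (Ee j) = 0" "D (delta Xx) Aa = 0" "D (delta Xx) Bb = 0"
proof -
  show "D (delta Xx) (Ee j) = 0"
  proof (cases "1 \<le> j \<and> j \<le> n")
    case True
    then have "D (delta Ff) (Us j) = D (delta Xx) (Ee j)" "D (delta Ff) (Us j) = 0"
      using der_basis_br[of Xx Uu "Us j"] der_basis_br[of Aa Yy "Us j"]
      by (simp_all add: lie_coord_simps)
    then show ?thesis
      by simp
  qed (simp add: der_delta_outside)
  show "D (delta Xx) Aa = 0"
    using der_basis_br[of Xx Bb Cc] by (simp add: lie_coord_simps der_zero)
  show "D (delta Xx) Bb = 0"
    using der_basis_br[of Xx Aa Cc] by (simp add: lie_coord_simps der_zero)
qed

lemma der_Uu_coords: "D (delta Uu) (Ee j) = 0" "D (delta Uu) Aa = 0" "D (delta Uu) Bb = 0"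
proof -
  show "D (delta Uu) (Ee j) = 0"
  proof (cases "1 \<le> j \<and> j \<le> n")
    case True
    then have "D (delta Ff) (Xs j) = - D (delta Uu) (Ee j)" "D (delta Ff) (Xs j) = 0"
      using der_basis_br[of Xx Uu "Xs j"] der_basis_br[of Aa Yy "Xs j"]
      by (simp_all add: lie_coord_simps)
    then show ?thesis
      by simp
  qed (simp add: der_delta_outside)
  show "D (delta Uu) Aa = 0"
    using der_basis_br[of Uu Cc Hh] by (simp add: lie_coord_simps der_zero der_Cc_coords)
  show "D (delta Uu) Bb = 0"
    using der_basis_br[of Uu Aa Cc] by (simp add: lie_coord_simps der_zero)
qed

lemma der_Yy_coords:
  "D (delta Yy) (Ee j) = 0" "D (delta Yy) Aa = 0" "D (delta Yy) Bb = 0" "D (delta Yy) Xx = 0"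
  "D (delta Yy) Uu = 0"
proof -
  show "D (delta Yy) (Ee j) = 0"
  proof (cases "1 \<le> j \<and> j \<le> n")
    case True
    then have "D (delta Hh) (Xs j) = - D (delta Yy) (Ee j)" "D (delta Hh) (Xs j) = 0"
      using der_basis_br[of Xx Yy "Xs j"] der_basis_br[of Aa Cc "Xs j"]
      by (simp_all add: lie_coord_simps)
    then show ?thesis
      by simp
  qed (simp add: der_delta_outside)
  show "D (delta Yy) Aa = 0"
    using der_basis_br[of Yy Cc Hh] by (simp add: lie_coord_simps der_zero der_Cc_coords)
  show "D (delta Yy) Bb = 0"
    using der_basis_br[of Aa Yy Cc] der_basis_br[of Xx Uu Cc] by (simp add: lie_coord_simps)
  show "D (delta Yy) Xx = 0"
    using der_basis_br[of Uu Yy Ff] by (simp add: lie_coord_simps der_zero der_Uu_coords)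
  show "D (delta Yy) Uu = 0"
    using der_basis_br[of Xx Yy Ff] der_Hh_Ff by (simp add: lie_coord_simps der_Xx_coords)
qed

lemma der_Uu_Xx: "D (delta Uu) Xx = 0"
  using der_basis_br[of Uu Yy Hh] by (simp add: lie_coord_simps der_zero der_Uu_coords der_Yy_coords)

end

context
  fixes n :: nat and b :: "nat \<Rightarrow> ('k::field) vec" and D :: "'k vec \<Rightarrow> 'k vec"
  assumes basis: "is_basis_E n b" and der: "D \<in> Der1 n"
begin

lemma der_basis_E: "1 \<le> i \<Longrightarrow> i \<le> n \<Longrightarrow> D (b i) \<in> nspace n"
  using der_in_nspace[OF der] basis_in_Espace[OF basis] by (simp add: Espace_def)

lemma der_basis_E_coord: "1 \<le> i \<Longrightarrow> i \<le> n \<Longrightarrow> D (b i) (Ee j) = 0"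
  using der_Espace_coord[OF der basis_in_Espace[OF basis]] .

lemmas der_generator_coords = der_Cc_coords[OF der] der_Aa_coords[OF der] der_Bb_coords[OF der]
  der_Xx_coords[OF der] der_Uu_coords[OF der] der_Uu_Xx[OF der] der_Yy_coords[OF der]

lemma der_basis_in_tail_span:
  assumes "1 \<le> i" "i \<le> n" "k \<le> n"
  shows "D (b i) \<in> tail_span (frakB n b) k"
  using assms der_basis_E_coord[OF assms(1,2)]
  by (intro in_tail_span_by_coords[OF basis der_basis_E])
    (auto simp: frakB_level_def Cc_index_def split: bidx.split)

lemma der_delta_in_tail_span:
  assumes "s \<in> {Aa, Bb, Xx, Uu, Yy, Cc, Ff, Hh}" "k \<le> frakB_level n b s"
  shows "D (delta s) \<in> tail_span (frakB n b) k"
proof (rule in_tail_span_by_coords[OF basis der_in_nspace[OF der delta_in_nspace]])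
  show "s \<in> valid_idx n"
    using assms by auto
  fix r assume "r \<in> valid_idx n" "D (delta s) r \<noteq> 0"
  then show "(\<forall>i. r \<noteq> Ee i) \<and> k \<le> frakB_level n b r"
    using assms der_basis_br[OF der, of Aa Bb r] der_basis_br[OF der, of Aa Yy r]
      der_basis_br[OF der, of Aa Cc r]
    by (cases r) (auto simp: frakB_level_def der_generator_coords basis_br_nonzero lie_apply
        delta_apply Cc_index_def)
qed

lemma der_wedge_in_tail_span:
  assumes "1 \<le> i" "i \<le> n" "1 \<le> j" "j \<le> n" "k \<le> Cc_index n b + 1"
  shows "D (lie n (b i) (b j)) \<in> tail_span (frakB n b) k"
proof -
  have E: "b i \<in> Espace n" "b j \<in> Espace n"
    using assms basis_in_Espace[OF basis] by auto
  have "D (lie n (b i) (b j)) = vadd (lie n (D (b i)) (b j)) (lie n (b i) (D (b j)))"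
    (is "_ = ?v")
    using E by (intro der_leibniz[OF der]) (simp_all add: Espace_def)
  also have "?v \<in> tail_span (frakB n b) k"
  proof (rule in_tail_span_by_coords[OF basis])
    show "?v \<in> nspace n"
      by (simp add: vadd_def nspace_def lie_apply)
    fix s assume "s \<in> valid_idx n" "?v s \<noteq> 0"
    then show "(\<forall>q. s \<noteq> Ee q) \<and> k \<le> frakB_level n b s"
      using assms E der_basis_E_coord
      by (cases s) (auto simp: frakB_level_def vadd_def lie_apply Espace_coord)
  qed
  finally show ?thesis .
qed

lemma der_bracket_generator_in_tail_span:
  assumes i: "1 \<le> i" "i \<le> n" and z: "z \<in> {Xx, Uu, Yy}"
    and k: "k \<le> Cc_index n b + 2 * n + i"
    and kX: "D (delta z) Xx \<noteq> 0 \<Longrightarrow> k \<le> Cc_index n b + i"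
    and kU: "D (delta z) Uu \<noteq> 0 \<Longrightarrow> k \<le> Cc_index n b + n + i"
  shows "D (lie n (b i) (delta z)) \<in> tail_span (frakB n b) k"
proof -
  have E: "b i \<in> Espace n"
    using i by (rule basis_in_Espace[OF basis])
  have Dz: "D (delta z) (Ee q) = 0" for q
    using z der_generator_coords by auto
  have "D (lie n (b i) (delta z)) = vadd (lie n (D (b i)) (delta z)) (lie n (b i) (D (delta z)))"
    using E z by (intro der_leibniz[OF der] delta_in_nspace) (auto simp: Espace_def)
  moreover have "lie n (D (b i)) (delta z) \<in> tail_span (frakB n b) k"
  proof (rule in_tail_span_by_coords[OF basis lie_in_nspace])
    fix s assume "s \<in> valid_idx n" "lie n (D (b i)) (delta z) s \<noteq> 0"
    then show "(\<forall>q. s \<noteq> Ee q) \<and> k \<le> frakB_level n b s"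
      using z k i der_basis_E_coord[OF i]
      by (cases s) (auto simp: frakB_level_def lie_apply delta_apply)
  qed
  moreover have "lie n (b i) (D (delta z)) \<in> tail_span (frakB n b) k"
  proof -
    have "Cc_index n b + 2 * n + i < length (frakB n b)"
      using i by (simp add: length_frakB)
    then have "D (delta z) Xx \<noteq> 0 \<Longrightarrow> lie n (b i) (delta Xx) \<in> tail_span (frakB n b) k"
      and "D (delta z) Uu \<noteq> 0 \<Longrightarrow> lie n (b i) (delta Uu) \<in> tail_span (frakB n b) k"
      and "lie n (b i) (delta Yy) \<in> tail_span (frakB n b) k"
      using kX kU k
      by (auto intro: nth_in_tail_span[OF _ _ frakB_nth_brackets(1)[OF i]]
          nth_in_tail_span[OF _ _ frakB_nth_brackets(2)[OF i]]
          nth_in_tail_span[OF _ _ frakB_nth_brackets(3)[OF i]])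
    then have "(\<lambda>r. D (delta z) Xx * lie n (b i) (delta Xx) r + D (delta z) Uu * lie n (b i) (delta Uu) r
        + D (delta z) Yy * lie n (b i) (delta Yy) r) \<in> tail_span (frakB n b) k"
      by (intro tail_span_add tail_span_scale)
    then show ?thesis
      using lie_Espace_left[OF E, of "D (delta z)"] Dz by simp
  qed
  ultimately show ?thesis
    by (simp add: vadd_def tail_span_add)
qed

end

theorem mainTheorem2:
  fixes n :: nat and b :: "nat \<Rightarrow> ('k::field_char_0) vec" and D :: "'k vec \<Rightarrow> 'k vec"
  assumes "n \<ge> 1"
    and "is_basis_E n b"
    and "D \<in> Der1 n"
  shows "\<forall>k < length (frakB n b). \<exists>c :: nat \<Rightarrow> 'k.
           D (frakB n b ! k) = (\<lambda>r. \<Sum>j\<in>{k..<length (frakB n b)}. c j * (frakB n b ! j) r)"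
proof (intro allI impI)
  note basis = assms(2) and der = assms(3)
  fix k assume "k < length (frakB n b)"
  then have "D (frakB n b ! k) \<in> tail_span (frakB n b) k"
  proof (cases rule: frakB_nth_cases)
    case (E i)
    then show ?thesis
      using der_basis_in_tail_span[OF basis der] by simp
  next
    case (Wedge i j)
    then show ?thesis
      using der_wedge_in_tail_span[OF basis der] by simp
  next
    case (Xs i)
    then show ?thesis
      using der_bracket_generator_in_tail_span[OF basis der, of i Xx] by simp
  next
    case (Us i)
    then show ?thesis
      using der_bracket_generator_in_tail_span[OF basis der, of i Uu] der_Uu_Xx[OF der] by simp
  next
    case (Ys i)
    then show ?thesis
      using der_bracket_generator_in_tail_span[OF basis der, of i Yy] der_Yy_coords[OF der] by simp
  qed (simp_all add: der_delta_in_tail_span[OF basis der] frakB_level_def)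
  then show "\<exists>c. D (frakB n b ! k) = (\<lambda>r. \<Sum>j\<in>{k..<length (frakB n b)}. c j * (frakB n b ! j) r)"
    by (simp add: tail_span_def)
qed
end
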